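(* For each integer $n\ge2$ there exists a homeomorphism $f$ of $B_n$ onto itself such that $S^{n-1}\cup\{0\}\subset\mathrm{Fix}(f)$ and, for some point $x\in B_n\setminus(S^{n-1}\cup\{0\})$, $\omega_f(x)$ is a subset of $S^{n-1}$ homeomorphic to a circle.
   Context: $B_n=\{x\in\mathbb{R}^n:\|x\|\le1\}$ (Euclidean norm), $S^{n-1}=\{x\in\mathbb{R}^n:\|x\|=1\}$ its boundary. $\mathrm{Fix}(f)$ is the set of fixed points of $f$, and $\omega_f(x)=\{y:\ \exists\, n_i\to+\infty,\ f^{n_i}(x)\to y\}$. *)

theory Defs
  imports "HOL-Analysis.Analysis"
begin

definition Fix :: "('a \<Rightarrow> 'a) \<Rightarrow> 'a set" where
  "Fix f = {x. f x = x}"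

definition omega_limit :: "('a::topological_space \<Rightarrow> 'a) \<Rightarrow> 'a \<Rightarrow> 'a set" where
  "omega_limit f x = {y. \<exists>r::nat \<Rightarrow> nat. strict_mono r \<and> ((\<lambda>i. (f ^^ r i) x) \<longlonglongrightarrow> y)}"

end

theory Submission
  imports Defs
begin

text \<open>Take orthonormal \<open>u, v\<close> and let \<open>f x = stretch |x| \<cdot> R (twist_angle |x|) x\<close>, where \<open>R a\<close>
  rotates the \<open>u,v\<close>-plane by \<open>a\<close> and fixes its orthogonal complement. The radial map
  \<open>r \<mapsto> r (1 + (1 - r)\<^sup>2)\<close> is an increasing bijection of \<open>[0, 1]\<close>, and the angle vanishes at
  \<open>|x| = 1\<close>, so \<open>f\<close> is a homeomorphism of the ball fixing the sphere and the origin. On the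
  orbit of \<open>u/2\<close> the gap \<open>t\<close> to the sphere evolves by \<open>t \<mapsto> t (1 - t + t\<^sup>2)\<close>, so it tends to
  \<open>0\<close>, while the accumulated angle \<open>-ln (2 t)\<close> diverges in steps tending to \<open>0\<close>. Such an angle
  sequence comes close to every point of the circle infinitely often, so the \<open>\<omega>\<close>-limit set of
  \<open>u/2\<close> is the unit circle of the \<open>u,v\<close>-plane.\<close>

definition seq_limits :: "(nat \<Rightarrow> 'a::topological_space) \<Rightarrow> 'a set" where
  "seq_limits X = {y. \<exists>r. strict_mono r \<and> (X \<circ> r) \<longlonglongrightarrow> y}"

lemma omega_limit_eq_seq_limits: "omega_limit f x = seq_limits (\<lambda>n. (f ^^ n) x)"
  by (simp add: omega_limit_def seq_limits_def comp_def)

lemma seq_limits_subset_closed: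
  assumes "closed C" and "\<And>n. X n \<in> C"
  shows "seq_limits X \<subseteq> C"
  using assms closed_sequentially[of C "X \<circ> _"] by (auto simp: seq_limits_def)

lemma seq_limits_continuous_image:
  assumes "continuous_on UNIV f"
  shows "f ` seq_limits X \<subseteq> seq_limits (f \<circ> X)"
proof
  fix z assume "z \<in> f ` seq_limits X"
  then obtain y r where z: "z = f y" and r: "strict_mono r" "(X \<circ> r) \<longlonglongrightarrow> y"
    by (auto simp: seq_limits_def)
  have "(\<lambda>i. f ((X \<circ> r) i)) \<longlonglongrightarrow> f y"
    using continuous_on_tendsto_compose[OF assms r(2)] by simp
  then show "z \<in> seq_limits (f \<circ> X)"
    using r(1) z by (auto simp: seq_limits_def comp_def)
qed

lemma seq_limits_subset_if_asymptotic:
  fixes X Y :: "nat \<Rightarrow> 'a::real_normed_vector"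
  assumes "(\<lambda>n. X n - Y n) \<longlonglongrightarrow> 0"
  shows "seq_limits Y \<subseteq> seq_limits X"
proof
  fix y assume "y \<in> seq_limits Y"
  then obtain r where r: "strict_mono r" "(Y \<circ> r) \<longlonglongrightarrow> y" by (auto simp: seq_limits_def)
  have "(\<lambda>i. Y (r i) + (X (r i) - Y (r i))) \<longlonglongrightarrow> y + 0"
    using r LIMSEQ_subseq_LIMSEQ[OF assms r(1)] by (intro tendsto_intros) (auto simp: comp_def)
  then show "y \<in> seq_limits X" using r(1) by (auto simp: seq_limits_def comp_def)
qed

lemma seq_limits_eq_if_asymptotic:
  fixes X Y :: "nat \<Rightarrow> 'a::real_normed_vector"
  assumes "(\<lambda>n. X n - Y n) \<longlonglongrightarrow> 0"
  shows "seq_limits X = seq_limits Y"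
proof -
  have "(\<lambda>n. Y n - X n) \<longlonglongrightarrow> 0"
    using tendsto_minus[OF assms] by simp
  then show ?thesis
    using seq_limits_subset_if_asymptotic assms by blast
qed

lemma mem_seq_limitsI:
  fixes X :: "nat \<Rightarrow> 'a::metric_space"
  assumes near: "\<And>e N. e > 0 \<Longrightarrow> \<exists>n>N. dist (X n) y < e"
  shows "y \<in> seq_limits X"
proof -
  define s where "s i N = (SOME n. N < n \<and> dist (X n) y < inverse (real (Suc i)))" for i N
  have s: "N < s i N \<and> dist (X (s i N)) y < inverse (real (Suc i))" for i N
    unfolding s_def by (rule someI_ex) (use near[of "inverse (real (Suc i))" N] in auto)
  define r where "r = rec_nat (s 0 0) s"
  have r_Suc: "r (Suc i) = s i (r i)" for i by (simp add: r_def)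
  have "strict_mono r" unfolding strict_mono_Suc_iff using s r_Suc by auto
  moreover have "(X \<circ> r) \<longlonglongrightarrow> y"
  proof (rule metric_LIMSEQ_I)
    fix e :: real assume "e > 0"
    then obtain N where N: "inverse (real (Suc N)) < e" using reals_Archimedean by blast
    have "dist (X (r (Suc m))) y < e" if "m \<ge> N" for m
    proof -
      have "dist (X (r (Suc m))) y < inverse (real (Suc m))" using s r_Suc by simp
      also have "\<dots> \<le> inverse (real (Suc N))" using that by (simp add: field_simps)
      finally show ?thesis using N by simp
    qed
    then show "\<exists>no. \<forall>n\<ge>no. dist ((X \<circ> r) n) y < e"
      by (metis Suc_le_D Suc_le_mono comp_apply)
  qed
  ultimately show ?thesis by (auto simp: seq_limits_def)
qed

lemma small_steps_hit_level:
  fixes \<theta> :: "nat \<Rightarrow> real"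
  assumes "M \<le> N" and "\<theta> M \<le> T" and "T \<le> \<theta> N" and "0 \<le> d"
    and steps: "\<And>n. M \<le> n \<Longrightarrow> \<theta> (Suc n) - \<theta> n \<le> d"
  shows "\<exists>n\<ge>M. T \<le> \<theta> n \<and> \<theta> n \<le> T + d"
  using assms(1,3)
proof (induction rule: dec_induct)
  case base
  then show ?case using assms(2,4) by (intro exI[of _ M]) simp
next
  case (step n)
  show ?case
  proof (cases "T \<le> \<theta> n")
    case True
    then show ?thesis using step.IH by blast
  next
    case False
    then show ?thesis using step.prems steps[of n] step.hyps(1)
      by (intro exI[of _ "Suc n"]) auto
  qed
qed

lemma seq_limits_cis_slow_winding:
  fixes \<theta> :: "nat \<Rightarrow> real"
  assumes slow: "(\<lambda>n. \<theta> (Suc n) - \<theta> n) \<longlonglongrightarrow> 0"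
    and unbounded: "filterlim \<theta> at_top sequentially"
  shows "seq_limits (\<lambda>n. cis (\<theta> n)) = sphere 0 1"
proof
  show "seq_limits (\<lambda>n. cis (\<theta> n)) \<subseteq> sphere 0 1"
    by (rule seq_limits_subset_closed) auto
  show "sphere 0 1 \<subseteq> seq_limits (\<lambda>n. cis (\<theta> n))"
  proof
    fix w :: complex assume "w \<in> sphere 0 1"
    then have w: "w = cis (Arg w)"
      using rcis_cmod_Arg[of w] by (simp add: rcis_def)
    show "w \<in> seq_limits (\<lambda>n. cis (\<theta> n))"
    proof (rule mem_seq_limitsI)
      fix e :: real and N :: nat assume "e > 0"
      obtain d where "d > 0" and d: "\<And>a. dist a (Arg w) < d \<Longrightarrow> dist (cis a) (cis (Arg w)) < e"
        using continuous_on_cis[OF continuous_on_id, of UNIV] \<open>e > 0\<close>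
        unfolding continuous_on_iff by (metis UNIV_I)
      obtain M0 where M0: "\<And>n. M0 \<le> n \<Longrightarrow> \<bar>\<theta> (Suc n) - \<theta> n\<bar> < d / 2"
        using LIMSEQ_D[OF slow, of "d / 2"] \<open>d > 0\<close> by auto
      define M where "M = max M0 (Suc N)"
      have "M > N" by (simp add: M_def)
      have M: "\<theta> (Suc n) - \<theta> n \<le> d / 2" if "M \<le> n" for n
      proof -
        have "\<bar>\<theta> (Suc n) - \<theta> n\<bar> < d / 2"
          by (intro M0) (use that in \<open>simp add: M_def\<close>)
        then show ?thesis by linarith
      qed
      txt \<open>Lift \<open>Arg w\<close> above \<open>\<theta> M\<close>; the angles, moving in steps of at most \<open>d/2\<close>, cannot jump
        over the window \<open>[T, T + d/2]\<close> on their way to \<open>\<infinity>\<close>.\<close>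
      define k where "k = \<lceil>(\<theta> M - Arg w) / (2 * pi)\<rceil>"
      define T where "T = Arg w + 2 * pi * of_int k"
      have "\<theta> M - Arg w \<le> of_int k * (2 * pi)"
        unfolding k_def by (rule ceiling_divide_upper) simp
      then have "\<theta> M \<le> T" by (simp add: T_def algebra_simps)
      obtain K where "K \<ge> M" and "T \<le> \<theta> K"
        using unbounded unfolding filterlim_at_top eventually_sequentially by (meson nle_le)
      then obtain n where "n \<ge> M" and n: "T \<le> \<theta> n" "\<theta> n \<le> T + d / 2"
        using small_steps_hit_level[of M K \<theta> T "d / 2"] \<open>\<theta> M \<le> T\<close> \<open>d > 0\<close> M by auto
      have "cis (\<theta> n - 2 * pi * of_int k) = cis (\<theta> n)"
        by (simp flip: cis_divide)
      moreover have "dist (\<theta> n - 2 * pi * of_int k) (Arg w) < d"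
        using n \<open>d > 0\<close> by (simp add: T_def dist_real_def)
      ultimately have "dist (cis (\<theta> n)) w < e" using d w by metis
      then show "\<exists>n>N. dist (cis (\<theta> n)) w < e"
        using \<open>n \<ge> M\<close> \<open>M > N\<close> by (intro exI[of _ n]) auto
    qed
  qed
qed

lemma one_minus_plus_square_pos: "0 < 1 - t + t\<^sup>2" for t :: real
proof -
  have "1 - t + t\<^sup>2 = (t - 1/2)\<^sup>2 + 3/4" by (simp add: power2_eq_square algebra_simps)
  then show ?thesis by (metis add_nonneg_pos zero_le_power2 zero_less_divide_iff zero_less_numeral)
qed

lemma one_minus_plus_square_le_one: "0 \<le> t \<Longrightarrow> t \<le> 1 \<Longrightarrow> 1 - t + t\<^sup>2 \<le> 1" for t :: real
  by (simp add: power2_eq_square mult_left_le)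

definition stretch :: "real \<Rightarrow> real" where
  "stretch r = 1 + (1 - r)\<^sup>2"

definition radial :: "real \<Rightarrow> real" where
  "radial r = r * stretch r"

definition twist_angle :: "real \<Rightarrow> real" where
  "twist_angle r = - ln (1 - r + r\<^sup>2)"

lemma stretch_pos: "0 < stretch r"
  by (simp add: stretch_def add_pos_nonneg)

lemma radial_0 [simp]: "radial 0 = 0" and radial_1 [simp]: "radial 1 = 1"
  by (simp_all add: radial_def stretch_def)

lemma radial_le_one:
  assumes "0 \<le> r" and "r \<le> 1"
  shows "radial r \<le> 1"
proof -
  have "r * (1 - r) \<le> 1" using assms mult_le_one[of r "1 - r"] by simp
  then have "r * (1 - r)\<^sup>2 \<le> 1 - r"
    using assms mult_right_mono[of "r * (1 - r)" 1 "1 - r"] by (simp add: power2_eq_square mult.assoc)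
  then show ?thesis by (simp add: radial_def stretch_def algebra_simps)
qed

lemma inj_on_radial: "inj_on radial {0..}"
proof
  fix a b :: real assume "a \<in> {0..}" "b \<in> {0..}" "radial a = radial b"
  then have a: "0 \<le> a" and b: "0 \<le> b" and eq: "radial a = radial b" by auto
  have "radial a - radial b = (a - b) * ((a - 1)\<^sup>2 + (b - 1)\<^sup>2 + a * b)"
    by (simp add: radial_def stretch_def algebra_simps power2_eq_square)
  moreover have "(a - 1)\<^sup>2 + (b - 1)\<^sup>2 + a * b > 0"
  proof (cases "a = 1")
    case True
    then show ?thesis using b by (cases "b = 0") (auto simp: add_nonneg_pos)
  next
    case False
    then have "(a - 1)\<^sup>2 > 0" by simp
    then show ?thesis using a b by (simp add: add_pos_nonneg)
  qed
  ultimately show "a = b" using eq by simp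
qed

lemma continuous_on_radial: "continuous_on S radial"
  unfolding radial_def stretch_def by (intro continuous_intros)

lemma continuous_on_twist_angle: "continuous_on S twist_angle"
  unfolding twist_angle_def
  by (intro continuous_intros) (metis one_minus_plus_square_pos order_less_irrefl)

lemma radial_one_minus: "radial (1 - t) = 1 - t * (1 - t + t\<^sup>2)"
  by (simp add: radial_def stretch_def algebra_simps power2_eq_square)

lemma twist_angle_one_minus: "twist_angle (1 - t) = - ln (1 - t + t\<^sup>2)"
  by (simp add: twist_angle_def power2_eq_square algebra_simps)

text \<open>\<open>orbit_gap n\<close> is \<open>1 - |twist\<^sup>n (u/2)|\<close>. By \<open>radial_one_minus\<close> one step maps the gap \<open>t\<close> to
  \<open>t (1 - t + t\<^sup>2)\<close>, and by \<open>twist_angle_one_minus\<close> it turns by \<open>-ln (1 - t + t\<^sup>2)\<close>, the logarithmic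
  decrease of the gap; so the angles telescope to \<open>orbit_angle\<close>.\<close>

primrec orbit_gap :: "nat \<Rightarrow> real" where
  "orbit_gap 0 = 1/2"
| "orbit_gap (Suc n) = orbit_gap n * (1 - orbit_gap n + (orbit_gap n)\<^sup>2)"

definition orbit_angle :: "nat \<Rightarrow> real" where
  "orbit_angle n = - ln (2 * orbit_gap n)"

lemma orbit_gap_bounds: "0 < orbit_gap n \<and> orbit_gap n \<le> 1/2"
proof (induction n)
  case 0
  then show ?case by simp
next
  case (Suc n)
  let ?t = "orbit_gap n"
  have "0 < orbit_gap (Suc n)"
    using Suc one_minus_plus_square_pos[of ?t] by simp
  moreover have "orbit_gap (Suc n) \<le> ?t"
    using Suc one_minus_plus_square_le_one[of ?t] by (simp add: mult_left_le)
  ultimately show ?case using Suc by linarith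
qed

lemma orbit_gap_Suc_le: "orbit_gap (Suc n) \<le> orbit_gap n"
  using orbit_gap_bounds[of n] one_minus_plus_square_le_one[of "orbit_gap n"]
  by (simp add: mult_left_le)

lemma orbit_gap_tendsto_0: "orbit_gap \<longlonglongrightarrow> 0"
proof -
  have "decseq orbit_gap" by (rule decseq_SucI) (rule orbit_gap_Suc_le)
  then obtain L where L: "orbit_gap \<longlonglongrightarrow> L" and L_le: "\<And>n. L \<le> orbit_gap n"
    using decseq_convergent[of orbit_gap 0] orbit_gap_bounds by (metis less_le)
  have "(\<lambda>n. orbit_gap (Suc n)) \<longlonglongrightarrow> L * (1 - L + L\<^sup>2)"
    unfolding orbit_gap.simps by (intro tendsto_intros L)
  with LIMSEQ_Suc[OF L] have "L * (1 - L + L\<^sup>2) = L"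
    using LIMSEQ_unique by blast
  then have "L\<^sup>2 * (1 - L) = 0" by (simp add: algebra_simps power2_eq_square)
  moreover have "L \<le> 1/2" using L_le[of 0] by simp
  ultimately show ?thesis using L by simp
qed

lemma orbit_angle_Suc: "orbit_angle (Suc n) = orbit_angle n - ln (1 - orbit_gap n + (orbit_gap n)\<^sup>2)"
  using orbit_gap_bounds[of n] one_minus_plus_square_pos[of "orbit_gap n"]
  by (simp add: orbit_angle_def mult.assoc ln_mult)

lemma orbit_angle_increment_tendsto_0: "(\<lambda>n. orbit_angle (Suc n) - orbit_angle n) \<longlonglongrightarrow> 0"
proof -
  have "(\<lambda>n. - ln (1 - orbit_gap n + (orbit_gap n)\<^sup>2)) \<longlonglongrightarrow> - ln (1 - 0 + 0\<^sup>2)"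
    by (intro tendsto_intros orbit_gap_tendsto_0) simp
  then show ?thesis by (simp add: orbit_angle_Suc)
qed

lemma orbit_angle_tendsto_at_top: "filterlim orbit_angle at_top sequentially"
proof -
  have "filterlim (\<lambda>n. 2 * orbit_gap n) (at_right 0) sequentially"
    using orbit_gap_bounds
    by (intro tendsto_imp_filterlim_at_right tendsto_mult_right_zero orbit_gap_tendsto_0) auto
  from filterlim_compose[OF ln_at_0 this] show ?thesis
    unfolding orbit_angle_def filterlim_uminus_at_bot .
qed

locale orthonormal_pair =
  fixes u v :: "'a::euclidean_space"
  assumes u_u: "u \<bullet> u = 1" and v_v: "v \<bullet> v = 1" and u_v: "u \<bullet> v = 0"
begin

lemma v_u: "v \<bullet> u = 0"
  using u_v by (simp add: inner_commute)

definition embed :: "complex \<Rightarrow> 'a" where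
  "embed w = Re w *\<^sub>R u + Im w *\<^sub>R v"

definition coord :: "'a \<Rightarrow> complex" where
  "coord x = Complex (x \<bullet> u) (x \<bullet> v)"

definition rotate :: "real \<Rightarrow> 'a \<Rightarrow> 'a" where
  "rotate a x = x - embed (coord x) + embed (cis a * coord x)"

lemma coord_embed [simp]: "coord (embed w) = w"
  by (simp add: coord_def embed_def inner_add_left u_u v_v u_v v_u complex_eq_iff)

lemma embed_diff: "embed (w - z) = embed w - embed z"
  by (simp add: embed_def algebra_simps)

lemma embed_of_real_mult: "embed (of_real c * w) = c *\<^sub>R embed w"
  by (simp add: embed_def algebra_simps)

lemma coord_add: "coord (x + y) = coord x + coord y"
  by (simp add: coord_def inner_add_left complex_eq_iff)

lemma coord_diff: "coord (x - y) = coord x - coord y"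
  by (simp add: coord_def inner_diff_left complex_eq_iff)

lemma coord_scaleR: "coord (c *\<^sub>R x) = of_real c * coord x"
  by (simp add: coord_def complex_eq_iff)

lemma continuous_on_embed: "continuous_on S embed"
  unfolding embed_def by (intro continuous_intros)

lemma inner_embed: "embed w \<bullet> embed z = Re w * Re z + Im w * Im z"
  by (simp add: embed_def inner_add_left inner_add_right u_u v_v u_v v_u)

lemma norm_embed [simp]: "norm (embed w) = cmod w"
proof -
  have "(norm (embed w))\<^sup>2 = (cmod w)\<^sup>2"
    by (simp add: power2_norm_eq_inner[of "embed w"] inner_embed cmod_power2
        power2_eq_square[symmetric])
  then show ?thesis by simp
qed

lemma orthogonal_part_embed: "(x - embed (coord x)) \<bullet> embed w = 0"
  by (simp add: embed_def coord_def inner_diff_left inner_diff_right inner_add_left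
      inner_add_right u_u v_v u_v v_u inner_commute)

lemma norm_add_embed_orthogonal:
  assumes "y \<bullet> embed w = 0"
  shows "(norm (y + embed w))\<^sup>2 = (norm y)\<^sup>2 + (cmod w)\<^sup>2"
  using assms by (simp add: power2_norm_eq_inner inner_add_left inner_add_right inner_commute)
    (simp add: power2_norm_eq_inner[symmetric])

lemma norm_rotate [simp]: "norm (rotate a x) = norm x"
proof -
  have "(norm (rotate a x))\<^sup>2 = (norm (x - embed (coord x)))\<^sup>2 + (cmod (coord x))\<^sup>2"
    unfolding rotate_def using norm_add_embed_orthogonal[OF orthogonal_part_embed]
    by (simp add: norm_mult)
  also have "\<dots> = (norm (x - embed (coord x) + embed (coord x)))\<^sup>2"
    using norm_add_embed_orthogonal[OF orthogonal_part_embed, of x "coord x"] by simp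
  finally show ?thesis by simp
qed

lemma coord_rotate: "coord (rotate a x) = cis a * coord x"
  by (simp add: rotate_def coord_add coord_diff)

lemma rotate_rotate_minus [simp]: "rotate (- a) (rotate a x) = x"
  by (simp add: rotate_def[of "- a"] coord_rotate mult.assoc[symmetric] cis_mult)
    (simp add: rotate_def)

lemma rotate_minus_rotate [simp]: "rotate a (rotate (- a) x) = x"
  using rotate_rotate_minus[of "- a" x] by simp

lemma rotate_scaleR: "rotate a (c *\<^sub>R x) = c *\<^sub>R rotate a x"
  by (simp add: rotate_def coord_scaleR embed_of_real_mult[symmetric] algebra_simps embed_def)

lemma rotate_0 [simp]: "rotate 0 x = x"
  by (simp add: rotate_def)

lemma rotate_embed: "rotate a (embed w) = embed (cis a * w)"
  by (simp add: rotate_def)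

lemma continuous_on_rotate:
  "continuous_on S a \<Longrightarrow> continuous_on S x \<Longrightarrow> continuous_on S (\<lambda>s. rotate (a s) (x s))"
  unfolding rotate_def embed_def coord_def by (intro continuous_intros)

definition twist :: "'a \<Rightarrow> 'a" where
  "twist x = stretch (norm x) *\<^sub>R rotate (twist_angle (norm x)) x"

lemma norm_twist: "norm (twist x) = radial (norm x)"
  using stretch_pos[of "norm x"] by (simp add: twist_def radial_def)

lemma twist_fixes_sphere: "norm x = 1 \<Longrightarrow> twist x = x"
  by (simp add: twist_def stretch_def twist_angle_def)

lemma twist_0: "twist 0 = 0"
  using rotate_scaleR[of _ 0 0] by (simp add: twist_def)

lemma continuous_on_twist: "continuous_on S twist"
  unfolding twist_def stretch_def
  by (intro continuous_intros continuous_on_rotate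
      continuous_on_compose2[OF continuous_on_twist_angle]) auto

lemma inj_on_twist: "inj_on twist (cball 0 1)"
proof
  fix x y assume "x \<in> cball 0 1" "y \<in> cball 0 1" and eq: "twist x = twist y"
  have "norm x = norm y"
    using inj_onD[OF inj_on_radial] norm_twist[of x] norm_twist[of y] eq by simp
  then have "rotate (twist_angle (norm x)) x = rotate (twist_angle (norm x)) y"
    using eq stretch_pos[of "norm x"] by (simp add: twist_def)
  then show "x = y"
    by (metis rotate_rotate_minus)
qed

lemma twist_image_cball: "twist ` cball 0 1 = cball 0 1"
proof
  show "twist ` cball 0 1 \<subseteq> cball 0 1"
    using norm_twist radial_le_one by auto
  show "cball 0 1 \<subseteq> twist ` cball 0 1"
  proof
    fix y :: 'a assume y: "y \<in> cball 0 1"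
    obtain r where r: "0 \<le> r" "r \<le> 1" "radial r = norm y"
      using IVT'[of radial 0 "norm y" 1] continuous_on_radial y by auto
    define x where "x = (1 / stretch r) *\<^sub>R rotate (- twist_angle r) y"
    have norm_x: "norm x = r"
      using r stretch_pos[of r] by (simp add: x_def radial_def flip: r(3))
    have "twist x = y"
      unfolding twist_def norm_x using stretch_pos[of r] by (simp add: x_def rotate_scaleR)
    then show "y \<in> twist ` cball 0 1"
      using norm_x r by force
  qed
qed

lemma twist_homeomorphism: "\<exists>g. homeomorphism (cball 0 1) (cball 0 1) twist g"
  using homeomorphism_compact[OF compact_cball continuous_on_twist twist_image_cball inj_on_twist]
  by blast

lemma funpow_twist_orbit:
  "(twist ^^ n) (embed (1/2)) = embed (of_real (1 - orbit_gap n) * cis (orbit_angle n))"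
proof (induction n)
  case 0
  then show ?case by (simp add: orbit_angle_def)
next
  case (Suc n)
  let ?t = "orbit_gap n"
  let ?z = "of_real (1 - ?t) * cis (orbit_angle n)"
  have norm_z: "norm (embed ?z) = 1 - ?t"
    using orbit_gap_bounds[of n] by (simp add: norm_mult del: of_real_diff)
  have radius: "stretch (1 - ?t) * (1 - ?t) = 1 - orbit_gap (Suc n)"
    using radial_one_minus[of ?t] by (simp add: radial_def mult.commute)
  have angle: "orbit_angle n + twist_angle (1 - ?t) = orbit_angle (Suc n)"
    by (simp add: twist_angle_one_minus orbit_angle_Suc)
  have "(twist ^^ Suc n) (embed (1/2)) = twist (embed ?z)"
    using Suc by simp
  also have "\<dots> = stretch (1 - ?t) *\<^sub>R embed (cis (twist_angle (1 - ?t)) * ?z)"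
    unfolding twist_def norm_z rotate_embed ..
  also have "\<dots> = embed (of_real (stretch (1 - ?t) * (1 - ?t))
                      * (cis (orbit_angle n) * cis (twist_angle (1 - ?t))))"
    by (simp add: embed_of_real_mult[symmetric] mult_ac del: of_real_diff)
  also have "\<dots> = embed (of_real (1 - orbit_gap (Suc n)) * cis (orbit_angle (Suc n)))"
    by (simp only: radius cis_mult angle)
  finally show ?case .
qed

lemma omega_limit_twist: "omega_limit twist (embed (1/2)) = embed ` sphere 0 1"
proof -
  have close: "(\<lambda>n. (twist ^^ n) (embed (1/2)) - embed (cis (orbit_angle n))) \<longlonglongrightarrow> 0"
  proof (rule tendsto_norm_zero_cancel)
    have "norm ((twist ^^ n) (embed (1/2)) - embed (cis (orbit_angle n))) = orbit_gap n" for n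
      using orbit_gap_bounds[of n]
      by (simp add: funpow_twist_orbit flip: embed_diff add: algebra_simps norm_mult)
    then show "(\<lambda>n. norm ((twist ^^ n) (embed (1/2)) - embed (cis (orbit_angle n)))) \<longlonglongrightarrow> 0"
      using orbit_gap_tendsto_0 by simp
  qed
  have winding: "seq_limits (\<lambda>n. cis (orbit_angle n)) = sphere 0 1"
    using seq_limits_cis_slow_winding orbit_angle_increment_tendsto_0 orbit_angle_tendsto_at_top
    by blast
  have "seq_limits (\<lambda>n. embed (cis (orbit_angle n))) = embed ` sphere 0 1"
  proof
    show "seq_limits (\<lambda>n. embed (cis (orbit_angle n))) \<subseteq> embed ` sphere 0 1"
      by (intro seq_limits_subset_closed compact_imp_closed compact_continuous_image
          continuous_on_embed compact_sphere) auto
    show "embed ` sphere 0 1 \<subseteq> seq_limits (\<lambda>n. embed (cis (orbit_angle n)))"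
      using seq_limits_continuous_image[OF continuous_on_embed, of "\<lambda>n. cis (orbit_angle n)"]
      by (simp add: winding comp_def)
  qed
  then show ?thesis
    using seq_limits_eq_if_asymptotic[OF close] by (simp add: omega_limit_eq_seq_limits)
qed

lemma embed_sphere_homeomorphic: "embed ` sphere 0 1 homeomorphic sphere (0::complex) 1"
proof -
  have "inj_on embed (sphere 0 1)"
    by (metis coord_embed inj_on_inverseI)
  then obtain g where "homeomorphism (sphere (0::complex) 1) (embed ` sphere 0 1) embed g"
    using homeomorphism_compact[OF compact_sphere continuous_on_embed refl] by blast
  then show ?thesis
    using homeomorphic_def homeomorphic_sym by blast
qed

end

theorem proposition4p1:
  assumes "DIM('a::euclidean_space) \<ge> 2"
  shows "\<exists>(f::'a \<Rightarrow> 'a) g.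
           homeomorphism (cball 0 1) (cball 0 1) f g \<and>
           sphere 0 1 \<union> {0} \<subseteq> Fix f \<and>
           (\<exists>x \<in> cball 0 1 - (sphere 0 1 \<union> {0}).
              omega_limit f x \<subseteq> sphere 0 1 \<and>
              omega_limit f x homeomorphic sphere (0::complex) 1)"
proof -
  obtain u v :: 'a where "u \<in> Basis" "v \<in> Basis" "u \<noteq> v"
    using assms by (metis card_le_Suc0_iff_eq finite_Basis not_less_eq_eq numeral_2_eq_2)
  then interpret orthonormal_pair u v
    by unfold_locales (auto simp: inner_Basis)
  obtain g where "homeomorphism (cball 0 1) (cball 0 1) twist g"
    using twist_homeomorphism by blast
  moreover have "sphere 0 1 \<union> {0} \<subseteq> Fix twist"
    using twist_fixes_sphere twist_0 by (auto simp: Fix_def)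
  moreover have "norm (embed (1/2)) = 1/2"
    by simp
  then have "embed (1/2) \<in> cball 0 1 - (sphere 0 1 \<union> {0})"
    by (auto simp del: norm_embed)
  moreover have "embed ` sphere 0 1 \<subseteq> sphere 0 1"
    by auto
  ultimately show ?thesis
    using omega_limit_twist embed_sphere_homeomorphic by metis
qed

end
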